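(* Let $G$ be a finite group, $H$ a subgroup of $G$, $\phi: H \to \{\pm 1\}$ a homomorphism, and $c \in G$. Then the equality $\phi(c^{-1}hc) = \phi(h)$ holds for at least half of the elements $h \in H \cap cHc^{-1}$.
   Context: For $h \in H \cap cHc^{-1}$ one has $c^{-1}hc \in H$, so $\phi(c^{-1}hc)$ is defined. *)

theory Defs
  imports "HOL-Algebra.Algebra"
begin

end

theory Submission
  imports Defs
begin

text \<open>Both \<open>\<phi>\<close> and \<open>h \<mapsto> \<phi>(c\<inverse>hc)\<close> are \<open>\<plusminus>1\<close>-valued characters of
  \<open>K = H \<inter> cHc\<inverse>\<close>. If they disagree at some \<open>k\<^sub>0\<close>, left translation by \<open>k\<^sub>0\<close> maps the
  disagreement set of \<open>K\<close> injectively into the agreement set, so the agreement set contains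
  at least half of \<open>K\<close>.\<close>

lemma (in group) card_le_twice_card_agreement_of_sign_characters:
  fixes f g :: "'a \<Rightarrow> int"
  assumes "finite K" and "K \<subseteq> carrier G"
    and K_mult: "\<And>a b. a \<in> K \<Longrightarrow> b \<in> K \<Longrightarrow> a \<otimes> b \<in> K"
    and f_sign: "\<And>a. a \<in> K \<Longrightarrow> f a \<in> {1, -1}"
    and g_sign: "\<And>a. a \<in> K \<Longrightarrow> g a \<in> {1, -1}"
    and f_mult: "\<And>a b. a \<in> K \<Longrightarrow> b \<in> K \<Longrightarrow> f (a \<otimes> b) = f a * f b"
    and g_mult: "\<And>a b. a \<in> K \<Longrightarrow> b \<in> K \<Longrightarrow> g (a \<otimes> b) = g a * g b"
  shows "card K \<le> 2 * card {k \<in> K. f k = g k}"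
proof -
  define A where "A = {k \<in> K. f k = g k}"
  have "A \<subseteq> K" by (auto simp: A_def)
  have card_K: "card K = card A + card (K - A)"
    using \<open>finite K\<close> \<open>A \<subseteq> K\<close> by (metis card_Diff_subset card_mono finite_subset le_add_diff_inverse)
  have "card (K - A) \<le> card A"
  proof (cases "K - A = {}")
    case True
    then show ?thesis by (metis card.empty le0)
  next
    case False
    then obtain k\<^sub>0 where k\<^sub>0: "k\<^sub>0 \<in> K" "f k\<^sub>0 \<noteq> g k\<^sub>0" by (auto simp: A_def)
    have "inj_on ((\<otimes>) k\<^sub>0) (K - A)"
      using k\<^sub>0(1) \<open>K \<subseteq> carrier G\<close> by (intro inj_onI) (metis l_cancel subsetD Diff_subset)
    moreover have "(\<otimes>) k\<^sub>0 ` (K - A) \<subseteq> A"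
    proof
      fix y assume "y \<in> (\<otimes>) k\<^sub>0 ` (K - A)"
      then obtain h where h: "h \<in> K" "f h \<noteq> g h" and y: "y = k\<^sub>0 \<otimes> h" by (auto simp: A_def)
      have "f y = g y"
        using y f_mult g_mult k\<^sub>0 h f_sign[of k\<^sub>0] g_sign[of k\<^sub>0] f_sign[of h] g_sign[of h] by auto
      then show "y \<in> A" using K_mult[OF k\<^sub>0(1) h(1)] y by (simp add: A_def)
    qed
    ultimately show ?thesis
      using \<open>finite K\<close> \<open>A \<subseteq> K\<close> by (metis card_inj_on_le finite_subset)
  qed
  with card_K show ?thesis by (simp add: A_def)
qed

lemma (in group) mult_inv_cancel_left:
  assumes "c \<in> carrier G" and "z \<in> carrier G"
  shows "c \<otimes> (inv c \<otimes> z) = z" and "inv c \<otimes> (c \<otimes> z) = z"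
  using assms by (simp_all flip: m_assoc)

lemma (in group) conj_inv_conj:
  assumes "k \<in> carrier G" and "c \<in> carrier G"
  shows "inv c \<otimes> (c \<otimes> k \<otimes> inv c) \<otimes> c = k"
  using assms by (simp add: m_assoc mult_inv_cancel_left)

lemma (in group) conj_mult:
  assumes "a \<in> carrier G" and "b \<in> carrier G" and "c \<in> carrier G"
  shows "inv c \<otimes> (a \<otimes> b) \<otimes> c = (inv c \<otimes> a \<otimes> c) \<otimes> (inv c \<otimes> b \<otimes> c)"
  using assms by (simp add: m_assoc mult_inv_cancel_left)

lemma (in group) conj_subgroup_mem_iff:
  assumes "subgroup H G" and "c \<in> carrier G" and "h \<in> carrier G"
  shows "h \<in> {c \<otimes> k \<otimes> inv c | k. k \<in> H} \<longleftrightarrow> inv c \<otimes> h \<otimes> c \<in> H"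
proof
  assume "h \<in> {c \<otimes> k \<otimes> inv c | k. k \<in> H}"
  then obtain k where k: "k \<in> H" "h = c \<otimes> k \<otimes> inv c" by blast
  then have "inv c \<otimes> h \<otimes> c = k"
    using assms(1,2) subgroup.mem_carrier conj_inv_conj by metis
  with k show "inv c \<otimes> h \<otimes> c \<in> H" by simp
next
  assume "inv c \<otimes> h \<otimes> c \<in> H"
  moreover have "h = c \<otimes> (inv c \<otimes> h \<otimes> c) \<otimes> inv c"
    using assms(2,3) by (simp add: m_assoc mult_inv_cancel_left)
  ultimately show "h \<in> {c \<otimes> k \<otimes> inv c | k. k \<in> H}" by blast
qed

lemma (in group) subgroup_inter_conj_mult_closed:
  assumes "subgroup H G" and "c \<in> carrier G"
    and "a \<in> H \<inter> {c \<otimes> k \<otimes> inv c | k. k \<in> H}" and "b \<in> H \<inter> {c \<otimes> k \<otimes> inv c | k. k \<in> H}"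
  shows "a \<otimes> b \<in> H \<inter> {c \<otimes> k \<otimes> inv c | k. k \<in> H}"
proof -
  have a: "a \<in> H" "a \<in> carrier G" and b: "b \<in> H" "b \<in> carrier G"
    using assms(3,4) subgroup.mem_carrier[OF assms(1)] by auto
  have "inv c \<otimes> a \<otimes> c \<in> H" "inv c \<otimes> b \<otimes> c \<in> H"
    using assms(3,4) conj_subgroup_mem_iff[OF assms(1,2)] a(2) b(2) by auto
  then have "inv c \<otimes> (a \<otimes> b) \<otimes> c \<in> H"
    unfolding conj_mult[OF a(2) b(2) assms(2)] by (rule subgroup.m_closed[OF assms(1)])
  moreover have "a \<otimes> b \<in> H"
    using assms(1) a(1) b(1) by (rule subgroup.m_closed)
  ultimately show ?thesis
    using conj_subgroup_mem_iff[OF assms(1,2) m_closed[OF a(2) b(2)]] by auto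
qed

theorem lemma1:
  fixes G (structure) and H :: "'a set" and \<phi> :: "'a \<Rightarrow> int" and c :: 'a
  assumes "group G" and "finite (carrier G)" and "subgroup H G"
    and "\<forall>h\<in>H. \<phi> h \<in> {1, -1}"
    and "\<forall>x\<in>H. \<forall>y\<in>H. \<phi> (x \<otimes> y) = \<phi> x * \<phi> y"
    and "c \<in> carrier G"
  shows "2 * card {h \<in> H \<inter> {c \<otimes> k \<otimes> inv c | k. k \<in> H}. \<phi> (inv c \<otimes> h \<otimes> c) = \<phi> h}
           \<ge> card (H \<inter> {c \<otimes> k \<otimes> inv c | k. k \<in> H})"
proof -
  interpret group G by fact
  let ?K = "H \<inter> {c \<otimes> k \<otimes> inv c | k. k \<in> H}"
  have K_carrier: "?K \<subseteq> carrier G"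
    using subgroup.subset[OF \<open>subgroup H G\<close>] by blast
  have conj_in_H: "inv c \<otimes> h \<otimes> c \<in> H" if "h \<in> ?K" for h
    using that K_carrier conj_subgroup_mem_iff[OF \<open>subgroup H G\<close> \<open>c \<in> carrier G\<close>] by blast
  show ?thesis
  proof (rule card_le_twice_card_agreement_of_sign_characters)
    show "finite ?K" using K_carrier \<open>finite (carrier G)\<close> finite_subset by blast
    show "?K \<subseteq> carrier G" by (rule K_carrier)
    show "\<And>a b. a \<in> ?K \<Longrightarrow> b \<in> ?K \<Longrightarrow> a \<otimes> b \<in> ?K"
      using assms(3,6) by (rule subgroup_inter_conj_mult_closed)
    show "\<And>a. a \<in> ?K \<Longrightarrow> \<phi> (inv c \<otimes> a \<otimes> c) \<in> {1, -1}" using assms(4) conj_in_H by blast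
    show "\<And>a. a \<in> ?K \<Longrightarrow> \<phi> a \<in> {1, -1}" using assms(4) by blast
    show "\<And>a b. a \<in> ?K \<Longrightarrow> b \<in> ?K \<Longrightarrow> \<phi> (inv c \<otimes> (a \<otimes> b) \<otimes> c)
            = \<phi> (inv c \<otimes> a \<otimes> c) * \<phi> (inv c \<otimes> b \<otimes> c)"
      using assms(5,6) K_carrier conj_in_H by (simp add: subset_iff conj_mult)
    show "\<And>a b. a \<in> ?K \<Longrightarrow> b \<in> ?K \<Longrightarrow> \<phi> (a \<otimes> b) = \<phi> a * \<phi> b" using assms(5) by blast
  qed
qed

end
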